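(* Let $X\subset\mathbb{R}^2$ be a finite set and let $w$ be a point in the interior of $\mathrm{conv}(X)$ which lies on a vertex or an edge of the farthest point Voronoi diagram of $X$. Then there exists a finite collection of points $X'$ such that $\mathrm{conv}(X)$ and $\mathrm{conv}(X')$ have the same extreme points and the quadratic min-power centre of $X'$ is $w$.
   Context: For a finite collection $Y=\{y_j:j\in J\}$ of points in the plane, its quadratic min-power centre is the unique minimiser of $P(s)=\sum_{j\in J}\|s-y_j\|^2+\max_{j\in J}\|s-y_j\|^2$. The farthest point Voronoi diagram of $X$ partitions the plane into the regions $V(x)=\{s:\|s-x\|=\max_{y\in X}\|s-y\|\}$, $x\in X$; its edges and vertices are the one- and zero-dimensional parts of the boundaries between these regions. In this paper a collection of nodes may contain coincident points (several nodes at the same location, each counted in the sum). *)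

theory Defs
  imports "HOL-Analysis.Analysis" "HOL-Library.Multiset"
begin

text \<open>A collection of nodes (possibly with coincident points) is a multiset of points.\<close>

definition qpower :: "(real^2) multiset \<Rightarrow> real^2 \<Rightarrow> real" where
  "qpower Y s = (\<Sum>y\<in>#Y. (dist s y)^2) + Max ((\<lambda>y. (dist s y)^2) ` set_mset Y)"

definition is_qmin_power_centre :: "(real^2) multiset \<Rightarrow> real^2 \<Rightarrow> bool" where
  "is_qmin_power_centre Y w \<longleftrightarrow>
     (\<forall>s. qpower Y w \<le> qpower Y s) \<and> (\<forall>s. qpower Y s = qpower Y w \<longrightarrow> s = w)"

definition fpv_region :: "(real^2) set \<Rightarrow> real^2 \<Rightarrow> (real^2) set" where
  "fpv_region X x = {s. dist s x = Max ((\<lambda>y. dist s y) ` X)}"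

text \<open>Points lying on a vertex or an edge of the farthest point Voronoi diagram:
  points on the common boundary of two distinct regions.\<close>
definition on_fpvd_skeleton :: "(real^2) set \<Rightarrow> real^2 \<Rightarrow> bool" where
  "on_fpvd_skeleton X w \<longleftrightarrow>
     (\<exists>x\<in>X. \<exists>y\<in>X. x \<noteq> y \<and> w \<in> fpv_region X x \<and> w \<in> fpv_region X y)"

end

theory Submission
  imports Defs
begin

text \<open>Pick a node \<open>x\<^sub>0\<close> of \<open>X\<close> farthest from \<open>w\<close> and add \<open>m\<close> copies of a point \<open>q\<close> close
  enough to \<open>w\<close> to lie in \<open>conv X\<close>, so that the extreme points do not change; \<open>q\<close> is chosen
  such that \<open>\<Sum>\<^sub>y (w - y) = x\<^sub>0 - w\<close> over the new collection. Then the sum of squared distances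
  at \<open>s\<close> is its value at \<open>w\<close> plus \<open>2 (s - w)\<cdot>(x\<^sub>0 - w) + n |s - w|\<^sup>2\<close>, while the maximum term is
  at least \<open>|s - x\<^sub>0|\<^sup>2 = |w - x\<^sub>0|\<^sup>2 - 2 (s - w)\<cdot>(x\<^sub>0 - w) + |s - w|\<^sup>2\<close>, with equality at \<open>w\<close>. The
  linear terms cancel, so the power exceeds its value at \<open>w\<close> by at least \<open>(n + 1) |s - w|\<^sup>2\<close>.\<close>

lemma dist_power2_recentre:
  fixes s w y :: "'a::real_inner"
  shows "(dist s y)\<^sup>2 = (dist w y)\<^sup>2 + 2 * ((s - w) \<bullet> (w - y)) + (dist s w)\<^sup>2"
proof -
  have "s - y = (s - w) + (w - y)" by simp
  then have "(dist s y)\<^sup>2 = ((s - w) + (w - y)) \<bullet> ((s - w) + (w - y))"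
    by (simp add: dist_norm power2_norm_eq_inner)
  also have "\<dots> = (s - w) \<bullet> (s - w) + 2 * ((s - w) \<bullet> (w - y)) + (w - y) \<bullet> (w - y)"
    unfolding inner_add_left inner_add_right by (simp add: inner_commute)
  finally show ?thesis
    by (simp add: dist_norm power2_norm_eq_inner)
qed

lemma sum_mset_dist_power2_recentre:
  fixes Y :: "'a::real_inner multiset"
  shows "(\<Sum>y\<in>#Y. (dist s y)\<^sup>2) =
           (\<Sum>y\<in>#Y. (dist w y)\<^sup>2) + 2 * ((s - w) \<bullet> (\<Sum>y\<in>#Y. w - y))
           + real (size Y) * (dist s w)\<^sup>2"
proof (induction Y)
  case (add y Y)
  have "(\<Sum>z\<in>#add_mset y Y. (dist s z)\<^sup>2) = (dist s y)\<^sup>2 + (\<Sum>z\<in>#Y. (dist s z)\<^sup>2)"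
    by simp
  also have "\<dots> = (dist w y)\<^sup>2 + (\<Sum>z\<in>#Y. (dist w z)\<^sup>2)
      + 2 * ((s - w) \<bullet> ((w - y) + (\<Sum>z\<in>#Y. w - z))) + (real (size Y) + 1) * (dist s w)\<^sup>2"
    unfolding add.IH dist_power2_recentre[of s y w] inner_add_right by (simp add: algebra_simps)
  finally show ?case by simp
qed simp

lemma qpower_ge_if_balanced:
  fixes Y :: "(real^2) multiset"
  assumes "x\<^sub>0 \<in># Y"
    and farthest: "\<And>y. y \<in># Y \<Longrightarrow> dist w y \<le> dist w x\<^sub>0"
    and balanced: "(\<Sum>y\<in>#Y. w - y) = x\<^sub>0 - w"
  shows "qpower Y s \<ge> qpower Y w + real (size Y + 1) * (dist s w)\<^sup>2"
proof -
  have max_w: "Max ((\<lambda>y. (dist w y)\<^sup>2) ` set_mset Y) = (dist w x\<^sub>0)\<^sup>2"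
    using assms(1) farthest by (intro Max_eqI) (auto intro: power_mono)
  have max_s: "Max ((\<lambda>y. (dist s y)\<^sup>2) ` set_mset Y) \<ge> (dist s x\<^sub>0)\<^sup>2"
    using assms(1) by (intro Max_ge) auto
  have "(s - w) \<bullet> (w - x\<^sub>0) = - ((s - w) \<bullet> (x\<^sub>0 - w))"
    by (metis inner_minus_right minus_diff_eq)
  then have far_s: "(dist s x\<^sub>0)\<^sup>2 = (dist w x\<^sub>0)\<^sup>2 - 2 * ((s - w) \<bullet> (x\<^sub>0 - w)) + (dist s w)\<^sup>2"
    using dist_power2_recentre[of s x\<^sub>0 w] by simp
  have "qpower Y s \<ge> (\<Sum>y\<in>#Y. (dist s y)\<^sup>2) + (dist s x\<^sub>0)\<^sup>2"
    unfolding qpower_def using max_s by linarith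
  moreover have "qpower Y w = (\<Sum>y\<in>#Y. (dist w y)\<^sup>2) + (dist w x\<^sub>0)\<^sup>2"
    unfolding qpower_def max_w ..
  ultimately show ?thesis
    unfolding sum_mset_dist_power2_recentre[of s Y w] balanced far_s by (simp add: algebra_simps)
qed

lemma is_qmin_power_centre_if_balanced:
  fixes Y :: "(real^2) multiset"
  assumes "x\<^sub>0 \<in># Y"
    and "\<And>y. y \<in># Y \<Longrightarrow> dist w y \<le> dist w x\<^sub>0"
    and "(\<Sum>y\<in>#Y. w - y) = x\<^sub>0 - w"
  shows "is_qmin_power_centre Y w"
  unfolding is_qmin_power_centre_def
proof (intro conjI allI impI)
  fix s
  have "real (size Y + 1) * (dist s w)\<^sup>2 \<ge> 0" by simp
  then show "qpower Y w \<le> qpower Y s"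
    using qpower_ge_if_balanced[OF assms, of s] by linarith
next
  fix s
  assume "qpower Y s = qpower Y w"
  then have "real (size Y + 1) * (dist s w)\<^sup>2 \<le> 0"
    using qpower_ge_if_balanced[OF assms, of s] by linarith
  then show "s = w"
    by (simp add: mult_le_0_iff)
qed

lemma interior_obtain_scaled_diff:
  fixes w v :: "'a::real_normed_vector"
  assumes "w \<in> interior S"
  obtains m :: nat and q where "m > 0" "q \<in> S" "real m *\<^sub>R (w - q) = v"
proof -
  obtain r where "r > 0" "ball w r \<subseteq> interior S"
    using assms open_contains_ball open_interior by blast
  then have "ball w r \<subseteq> S"
    using interior_subset by blast
  obtain m :: nat where m: "norm v / r < real m"
    using reals_Archimedean2 by blast
  with \<open>r > 0\<close> have "m > 0"
    by (cases "m = 0") (auto simp: divide_less_0_iff)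
  define q where "q = w - (1 / real m) *\<^sub>R v"
  have "dist w q = norm v / real m"
    unfolding q_def dist_norm using \<open>m > 0\<close> by simp
  also have "\<dots> < r"
    using m \<open>m > 0\<close> \<open>r > 0\<close> by (simp add: divide_less_eq mult.commute pos_divide_less_eq)
  finally have "q \<in> S"
    using \<open>ball w r \<subseteq> S\<close> by auto
  moreover have "real m *\<^sub>R (w - q) = v"
    unfolding q_def using \<open>m > 0\<close> by simp
  ultimately show thesis
    using \<open>m > 0\<close> that by blast
qed

lemma convex_hull_subset_cball_farthest:
  fixes X :: "'a::real_normed_vector set"
  assumes "finite X" "X \<noteq> {}"
  obtains x\<^sub>0 where "x\<^sub>0 \<in> X" "convex hull X \<subseteq> cball w (dist w x\<^sub>0)"
proof -
  have "Max (dist w ` X) \<in> dist w ` X"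
    using assms by simp
  then obtain x\<^sub>0 where "x\<^sub>0 \<in> X" "dist w x\<^sub>0 = Max (dist w ` X)"
    by auto
  with assms(1) have "X \<subseteq> cball w (dist w x\<^sub>0)"
    by auto
  then have "convex hull X \<subseteq> cball w (dist w x\<^sub>0)"
    by (simp add: convex_cball hull_minimal)
  with \<open>x\<^sub>0 \<in> X\<close> show thesis using that by blast
qed

theorem proposition4:
  fixes X :: "(real^2) set" and w :: "real^2"
  assumes "finite X"
    and "w \<in> interior (convex hull X)"
    and "on_fpvd_skeleton X w"
  shows "\<exists>X' :: (real^2) multiset.
           {p. p extreme_point_of (convex hull X)} =
             {p. p extreme_point_of (convex hull (set_mset X'))}
           \<and> is_qmin_power_centre X' w"
proof -
  have "X \<noteq> {}" using assms(2) by auto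
  then obtain x\<^sub>0 where "x\<^sub>0 \<in> X" and hull_cball: "convex hull X \<subseteq> cball w (dist w x\<^sub>0)"
    using convex_hull_subset_cball_farthest[OF assms(1)] by blast
  obtain m :: nat and q where "m > 0" "q \<in> convex hull X"
    and q: "real m *\<^sub>R (w - q) = (x\<^sub>0 - w) - (\<Sum>y\<in>X. w - y)"
    using interior_obtain_scaled_diff[OF assms(2)] by blast
  define X' where "X' = mset_set X + replicate_mset m q"
  have set_X': "set_mset X' = insert q X"
    unfolding X'_def using assms(1) \<open>m > 0\<close> by auto
  have "convex hull (set_mset X') = convex hull X"
    unfolding set_X' using \<open>q \<in> convex hull X\<close> by (rule hull_redundant)
  moreover have "is_qmin_power_centre X' w"
  proof (rule is_qmin_power_centre_if_balanced)
    show "x\<^sub>0 \<in># X'" using set_X' \<open>x\<^sub>0 \<in> X\<close> by simp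
    show "dist w y \<le> dist w x\<^sub>0" if "y \<in># X'" for y
    proof -
      have "y \<in> convex hull X"
        using that \<open>q \<in> convex hull X\<close> hull_subset[of X convex] unfolding set_X' by blast
      then show ?thesis
        using hull_cball by (simp add: subset_iff)
    qed
    have "(\<Sum>y\<in>#X'. w - y) = (\<Sum>y\<in>X. w - y) + real m *\<^sub>R (w - q)"
      unfolding X'_def using assms(1) by (simp add: sum_unfold_sum_mset scaleR_conv_of_real)
    then show "(\<Sum>y\<in>#X'. w - y) = x\<^sub>0 - w"
      unfolding q by simp
  qed
  ultimately show ?thesis by (intro exI[of _ X']) simp
qed

end
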